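(* For all integers $n\ge1$ and $1\le q\le 2^{n-1}$, we have $\overline{\xi_f}(E_{2^n/q})=\dfrac{2^n}{q}$.
   Context: For $p,k\in\mathbb{N}$ with $p/k\ge2$, the fraction graph $E_{p/k}$ has vertex set $\mathbb{Z}_p$, and distinct vertices $i,j$ are adjacent iff their cyclic distance $\min(|i-j|,p-|i-j|)$ is strictly less than $k$; here $p=2^n$, $k=q$. For a graph $G$, $\overline{\xi_f}(G)$ (complement of the projective rank) is the infimum of $d/r$ over all $d,r\in\mathbb{N}$ for which there is an assignment of $r$-dimensional subspaces $W_v\le\mathbb{C}^d$ to the vertices of $G$ such that distinct non-adjacent vertices receive orthogonal subspaces. *)

theory Defs
  imports Complex_Main
begin

text \<open>Complex coordinate space C^d, realised as functions nat \<Rightarrow> complex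
  vanishing outside the index set {..<d}.\<close>
definition cvec :: "nat \<Rightarrow> (nat \<Rightarrow> complex) set" where
  "cvec d = {x. \<forall>i\<ge>d. x i = 0}"

definition cinner :: "nat \<Rightarrow> (nat \<Rightarrow> complex) \<Rightarrow> (nat \<Rightarrow> complex) \<Rightarrow> complex" where
  "cinner d x y = (\<Sum>i<d. x i * cnj (y i))"

definition cspan :: "(nat \<Rightarrow> complex) set \<Rightarrow> (nat \<Rightarrow> complex) set" where
  "cspan B = {x. \<exists>c :: (nat \<Rightarrow> complex) \<Rightarrow> complex. x = (\<lambda>i. \<Sum>b\<in>B. c b * b i)}"

definition cindep :: "(nat \<Rightarrow> complex) set \<Rightarrow> bool" where
  "cindep B = (\<forall>c :: (nat \<Rightarrow> complex) \<Rightarrow> complex.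
      (\<forall>i. (\<Sum>b\<in>B. c b * b i) = 0) \<longrightarrow> (\<forall>b\<in>B. c b = 0))"

definition csubspace_dim :: "nat \<Rightarrow> nat \<Rightarrow> (nat \<Rightarrow> complex) set \<Rightarrow> bool" where
  "csubspace_dim d r W = (W \<subseteq> cvec d \<and>
     (\<exists>B. finite B \<and> card B = r \<and> B \<subseteq> W \<and> cindep B \<and> cspan B = W))"

definition corth :: "nat \<Rightarrow> (nat \<Rightarrow> complex) set \<Rightarrow> (nat \<Rightarrow> complex) set \<Rightarrow> bool" where
  "corth d U W = (\<forall>x\<in>U. \<forall>y\<in>W. cinner d x y = 0)"

text \<open>Complement of the projective rank of a graph with vertex set V and adjacency E:
  infimum of d/r over all assignments of r-dimensional subspaces of C^d (r \<ge> 1)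
  such that distinct non-adjacent vertices receive orthogonal subspaces.\<close>
definition xi_f_bar :: "'a set \<Rightarrow> ('a \<Rightarrow> 'a \<Rightarrow> bool) \<Rightarrow> real" where
  "xi_f_bar V E = Inf {real d / real r | d r. r \<ge> 1 \<and>
      (\<exists>W :: 'a \<Rightarrow> (nat \<Rightarrow> complex) set.
         (\<forall>v\<in>V. csubspace_dim d r (W v)) \<and>
         (\<forall>u\<in>V. \<forall>v\<in>V. u \<noteq> v \<and> \<not> E u v \<longrightarrow> corth d (W u) (W v)))}"

text \<open>Fraction graph E_{p/k}: vertices Z_p = {0..<p}, distinct i, j adjacent iff
  their cyclic distance is strictly less than k.\<close>
definition cycdist :: "nat \<Rightarrow> nat \<Rightarrow> nat \<Rightarrow> nat" where
  "cycdist p i j = (let a = (if i \<le> j then j - i else i - j) in min a (p - a))"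

definition frac_adj :: "nat \<Rightarrow> nat \<Rightarrow> nat \<Rightarrow> nat \<Rightarrow> bool" where
  "frac_adj p k i j = (i \<noteq> j \<and> cycdist p i j < k)"

end

theory Submission
  imports Defs "HOL-Library.Function_Algebras"
begin

text \<open>
  Write p = 2^n.  The upper bound p/q comes from the window representation: vertex v receives the
  span of the q unit vectors e_v, ..., e_{v+q-1} of C^p, and vertices at cyclic distance at least q
  receive disjoint windows.

  For the lower bound, consider subspaces V_v of C^d (v in Z_p) with V_u orthogonal to V_v whenever
  the cyclic distance of u and v is at least q.  When 2q <= p, their dimensions sum to at most q d,
  by induction on n.  For q = 1 the subspaces are pairwise orthogonal.  For even q the family
  splits into two such families on the even and on the odd vertices, with parameters p/2 and q/2.
  For odd q, Grassmann's formula for neighbouring subspaces gives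
  2 \<Sum> dim V_v <= \<Sum> dim (V_v + V_{v+1}) + \<Sum> dim (V_v \<inter> V_{v+1}),
  and the sums and intersections form families with the even parameters q + 1 and q - 1.
\<close>

section \<open>Dimension counting in vector spaces\<close>

text \<open>The ambient space nat \<Rightarrow> complex used below is infinite-dimensional, and dim is 0 on
  infinite-dimensional sets, so these facts are relativised to the span of a finite set F.\<close>

context vector_space
begin

lemma span_Un_span_right: "span (A \<union> span B) = span (A \<union> B)"
proof (rule antisym)
  have "A \<union> span B \<subseteq> span (A \<union> B)"
    using span_superset[of "A \<union> B"] span_mono[of B "A \<union> B"] by blast
  then show "span (A \<union> span B) \<subseteq> span (A \<union> B)"
    using span_minimal subspace_span by blast
  show "span (A \<union> B) \<subseteq> span (A \<union> span B)"
    using span_superset[of B] by (intro span_mono) auto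
qed

lemma card_le_dim_if_subset_span:
  assumes "finite F" "V \<subseteq> span F" "B \<subseteq> V" "independent B"
  shows "card B \<le> dim V"
proof -
  obtain C where C: "C \<subseteq> V" "independent C" "V \<subseteq> span C" "card C = dim V"
    using basis_exists by metis
  have "finite C"
    using independent_span_bound[OF assms(1) C(2)] C(1) assms(2) by blast
  moreover have "B \<subseteq> span C"
    using assms(3) C(3) by blast
  ultimately have "card B \<le> card C"
    using independent_span_bound[OF _ assms(4)] by blast
  then show ?thesis
    using C(4) by simp
qed

lemma dim_mono_if_subset_span:
  assumes "finite F" "T \<subseteq> span F" "S \<subseteq> T"
  shows "dim S \<le> dim T"
proof -
  obtain B where B: "B \<subseteq> S" "independent B" "card B = dim S"
    using basis_exists by metis
  have "B \<subseteq> T"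
    using B(1) assms(3) by blast
  from card_le_dim_if_subset_span[OF assms(1,2) this B(2)] show ?thesis
    using B(3) by simp
qed

lemma dim_strict_mono_if_subset_span:
  assumes "finite F" "T \<subseteq> span F" "S \<subseteq> T" "x \<in> T" "x \<notin> span S"
  shows "dim S < dim T"
proof -
  obtain B where B: "B \<subseteq> S" "independent B" "S \<subseteq> span B" "card B = dim S"
    using basis_exists by metis
  have "x \<notin> span B"
    using span_mono[OF B(1)] assms(5) by blast
  then have indep: "independent (insert x B)"
    by (rule independent_insertI[OF _ B(2)])
  have "x \<notin> B"
    using \<open>x \<notin> span B\<close> span_superset by blast
  moreover have "finite B"
    using independent_span_bound[OF assms(1) B(2)] B(1) assms(2,3) by blast
  ultimately have "card (insert x B) = dim S + 1"
    using B(4) by simp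
  moreover have "insert x B \<subseteq> T"
    using B(1) assms(3,4) by blast
  then have "card (insert x B) \<le> dim T"
    by (rule card_le_dim_if_subset_span[OF assms(1,2) _ indep])
  ultimately show ?thesis by simp
qed

lemma dim_insert_le_if_subset_span:
  assumes "finite F" "A \<subseteq> span F"
  shows "dim (insert x A) \<le> dim A + 1"
proof -
  obtain B where B: "B \<subseteq> A" "independent B" "A \<subseteq> span B" "card B = dim A"
    using basis_exists by metis
  have "finite B"
    using independent_span_bound[OF assms(1) B(2)] B(1) assms(2) by blast
  have "A \<subseteq> span (insert x B)"
    using B(3) span_mono[of B "insert x B"] by blast
  then have "insert x A \<subseteq> span (insert x B)"
    by (simp add: span_base)
  then have "dim (insert x A) \<le> card (insert x B)"
    using \<open>finite B\<close> by (intro dim_le_card) simp_all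
  also have "\<dots> \<le> dim A + 1"
    using \<open>finite B\<close> B(4) by (simp add: card_insert_if)
  finally show ?thesis .
qed

text \<open>Adding x \<notin> span X to X raises dim (S + span X) + dim (S \<inter> span X): either x \<notin> S + span X,
  or x = s + t with s \<in> S - span X and t \<in> span X.\<close>
lemma dim_span_Un_add_dim_Int_less_insert:
  assumes F: "finite F" and S: "subspace S" "S \<subseteq> span F"
    and X: "insert x X \<subseteq> span F" and x: "x \<notin> span X"
  shows "dim (span (S \<union> X)) + dim (S \<inter> span X)
    < dim (span (S \<union> insert x X)) + dim (S \<inter> span (insert x X))"
proof -
  let ?T = "span X" and ?T' = "span (insert x X)"
  let ?U = "span (S \<union> X)" and ?U' = "span (S \<union> insert x X)"
  have amb: "?U' \<subseteq> span F" "S \<inter> ?T' \<subseteq> span F"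
    using span_minimal[of _ "span F"] X S(2) by auto
  have UU': "?U \<subseteq> ?U'" and TT': "?T \<subseteq> ?T'"
    by (rule span_mono, blast)+
  show ?thesis
  proof (cases "x \<in> ?U")
    case True
    then obtain s t where st: "x = s + t" "s \<in> S" "t \<in> ?T"
      using span_Un[of S X] span_eq_iff[of S] S(1) by blast
    have "s = x - t"
      using st(1) by simp
    then have "s \<in> S \<inter> ?T'"
      using st(2,3) TT' span_diff[of x "insert x X" t] span_base[of x "insert x X"] by blast
    moreover have "s \<notin> ?T"
      using x st span_add[of s X t] by blast
    then have "s \<notin> span (S \<inter> ?T)"
      using span_mono[of "S \<inter> ?T" ?T] span_span[of X] by blast
    ultimately have "dim (S \<inter> ?T) < dim (S \<inter> ?T')"
      using dim_strict_mono_if_subset_span[OF F amb(2)] TT' by blast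
    then show ?thesis
      using dim_mono_if_subset_span[OF F amb(1) UU'] by simp
  next
    case False
    have "x \<in> ?U'"
      by (simp add: span_base)
    then have "dim ?U < dim ?U'"
      using dim_strict_mono_if_subset_span[OF F amb(1) UU'] False span_span by simp
    moreover have "S \<inter> ?T \<subseteq> S \<inter> ?T'"
      using TT' by blast
    then have "dim (S \<inter> ?T) \<le> dim (S \<inter> ?T')"
      by (rule dim_mono_if_subset_span[OF F amb(2)])
    ultimately show ?thesis by simp
  qed
qed

lemma dim_add_dim_span_le_dim_span_Un_Int:
  assumes F: "finite F" and S: "subspace S" "S \<subseteq> span F"
    and X: "finite X" "X \<subseteq> span F"
  shows "dim S + dim (span X) \<le> dim (span (S \<union> X)) + dim (S \<inter> span X)"
  using X
proof (induction X rule: finite_induct)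
  case empty
  have "dim {0} = 0"
    using dim_le_card[of "{0}" "{}"] by simp
  then show ?case
    using S by simp
next
  case (insert x X)
  have IH: "dim S + dim (span X) \<le> dim (span (S \<union> X)) + dim (S \<inter> span X)"
    using insert by simp
  show ?case
  proof (cases "x \<in> span X")
    case True
    then have "x \<in> span (S \<union> X)"
      using span_mono[of X "S \<union> X"] by blast
    then have "span (insert x X) = span X" "span (S \<union> insert x X) = span (S \<union> X)"
      using True span_redundant[of x X] span_redundant[of x "S \<union> X"] by auto
    then show ?thesis
      using IH by simp
  next
    case False
    have "dim (span (insert x X)) \<le> dim (span X) + 1"
      using dim_insert_le_if_subset_span[OF F, of X x] insert.prems by simp
    then show ?thesis
      using IH dim_span_Un_add_dim_Int_less_insert[OF F S insert.prems False] by linarith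
  qed
qed

lemma dim_add_dim_le_dim_span_Un_Int:
  assumes F: "finite F" and S: "subspace S" "S \<subseteq> span F" and T: "subspace T" "T \<subseteq> span F"
  shows "dim S + dim T \<le> dim (span (S \<union> T)) + dim (S \<inter> T)"
proof -
  obtain X where X: "X \<subseteq> T" "independent X" "T \<subseteq> span X"
    using basis_exists by metis
  have "finite X"
    using independent_span_bound[OF F X(2)] X(1) T(2) by blast
  moreover have "X \<subseteq> span F"
    using X(1) T(2) by blast
  ultimately have "dim S + dim (span X) \<le> dim (span (S \<union> X)) + dim (S \<inter> span X)"
    by (rule dim_add_dim_span_le_dim_span_Un_Int[OF F S])
  moreover have "span X = T"
    using X T(1) by (simp add: span_subspace)
  moreover have "span (S \<union> X) = span (S \<union> T)"
    using span_Un_span_right[of S X] \<open>span X = T\<close> by simp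
  ultimately show ?thesis
    by (simp del: dim_span)
qed

end

section \<open>The Hermitian space C^d\<close>

definition cscale :: "complex \<Rightarrow> (nat \<Rightarrow> complex) \<Rightarrow> nat \<Rightarrow> complex" where
  "cscale c x = (\<lambda>i. c * x i)"

interpretation cv: vector_space cscale
  by unfold_locales (auto simp: cscale_def fun_eq_iff algebra_simps)

lemma sum_fun_apply: "(\<Sum>x\<in>A. f x) i = (\<Sum>x\<in>A. f x i)"
  for f :: "'a \<Rightarrow> nat \<Rightarrow> 'b::comm_monoid_add"
  by (induction A rule: infinite_finite_induct) auto

lemma sum_cscale: "(\<Sum>v\<in>B. cscale (c v) v) = (\<lambda>i. \<Sum>v\<in>B. c v * v i)"
  by (simp add: fun_eq_iff sum_fun_apply cscale_def)

lemma cspan_eq_span: "finite B \<Longrightarrow> cspan B = cv.span B"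
  unfolding cspan_def cv.span_finite sum_cscale by auto

lemma cindep_iff_independent: "finite B \<Longrightarrow> cindep B \<longleftrightarrow> cv.independent B"
  unfolding cindep_def cv.dependent_finite sum_cscale by (auto simp: fun_eq_iff)

lemma csubspace_dimD:
  assumes "csubspace_dim d r W"
  shows "cv.subspace W" "W \<subseteq> cvec d" "cv.dim W = r"
proof -
  obtain B where B: "W \<subseteq> cvec d" "finite B" "card B = r" "cindep B" "cspan B = W"
    using assms by (auto simp: csubspace_dim_def)
  then have "W = cv.span B" "cv.independent B"
    by (simp_all add: cspan_eq_span cindep_iff_independent)
  then show "cv.subspace W" "W \<subseteq> cvec d" "cv.dim W = r"
    using B cv.dim_span_eq_card_independent by simp_all
qed

definition unit_vec :: "nat \<Rightarrow> nat \<Rightarrow> complex" where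
  "unit_vec k = (\<lambda>i. if i = k then 1 else 0)"

lemma inj_unit_vec: "inj unit_vec"
  by (rule injI) (metis unit_vec_def zero_neq_one)

lemma cvec_subset_span_unit_vec: "cvec d \<subseteq> cv.span (unit_vec ` {..<d})"
proof
  fix x assume x: "x \<in> cvec d"
  have "(\<Sum>k<d. x k * unit_vec k i) = x i" for i
  proof -
    have "(\<Sum>k<d. x k * unit_vec k i) = (\<Sum>k<d. if k = i then x i else 0)"
      by (intro sum.cong) (auto simp: unit_vec_def)
    then show ?thesis
      using x by (simp add: cvec_def)
  qed
  then have "x = (\<Sum>k<d. cscale (x k) (unit_vec k))"
    by (simp add: fun_eq_iff sum_fun_apply cscale_def)
  also have "\<dots> \<in> cv.span (unit_vec ` {..<d})"
    by (intro cv.span_sum cv.span_scale cv.span_base) auto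
  finally show "x \<in> cv.span (unit_vec ` {..<d})" .
qed

lemma subspace_cvec: "cv.subspace (cvec d)"
  by (auto simp: cv.subspace_def cvec_def cscale_def)

lemma dim_le_if_subset_cvec:
  assumes "S \<subseteq> cvec d"
  shows "cv.dim S \<le> d"
proof -
  have "cv.dim S \<le> card (unit_vec ` {..<d})"
    using assms cvec_subset_span_unit_vec by (intro cv.dim_le_card) auto
  also have "\<dots> \<le> d"
    using card_image_le[of "{..<d}" unit_vec] by simp
  finally show ?thesis .
qed

lemma cinner_add_left: "cinner d (x + y) z = cinner d x z + cinner d y z"
  by (simp add: cinner_def distrib_right sum.distrib)

lemma cinner_cscale_left: "cinner d (cscale c x) z = c * cinner d x z"
  by (simp add: cinner_def cscale_def sum_distrib_left mult.assoc)

lemma cinner_commute: "cinner d y x = cnj (cinner d x y)"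
  by (simp add: cinner_def mult.commute)

lemma cinner_self_eq_0_iff: "x \<in> cvec d \<Longrightarrow> cinner d x x = 0 \<longleftrightarrow> x = 0"
proof
  assume x: "x \<in> cvec d" and "cinner d x x = 0"
  moreover have "cinner d x x = of_real (\<Sum>i<d. (cmod (x i))\<^sup>2)"
    unfolding cinner_def of_real_sum complex_norm_square by (rule refl)
  ultimately have "(\<Sum>i<d. (cmod (x i))\<^sup>2) = 0"
    by (metis of_real_eq_0_iff)
  then have "x i = 0" if "i < d" for i
    using that by (simp add: sum_nonneg_eq_0_iff)
  then show "x = 0"
    using x by (simp add: fun_eq_iff cvec_def) (metis not_le)
qed (simp add: cinner_def)

lemma corth_sym: "corth d S T \<Longrightarrow> corth d T S"
  unfolding corth_def by (metis cinner_commute complex_cnj_zero)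

lemma corth_span:
  assumes "corth d S T"
  shows "corth d (cv.span S) T"
proof -
  have "cv.subspace {x. \<forall>y\<in>T. cinner d x y = 0}"
    by (auto simp: cv.subspace_def cinner_add_left cinner_cscale_left) (simp add: cinner_def)
  then have "cv.span S \<subseteq> {x. \<forall>y\<in>T. cinner d x y = 0}"
    using assms by (intro cv.span_minimal) (auto simp: corth_def)
  then show ?thesis
    by (auto simp: corth_def)
qed

lemma corth_span_Un:
  assumes "corth d A C" "corth d A D" "corth d B C" "corth d B D"
  shows "corth d (cv.span (A \<union> B)) (cv.span (C \<union> D))"
proof -
  have "corth d (A \<union> B) (C \<union> D)"
    using assms by (auto simp: corth_def)
  then have "corth d (C \<union> D) (cv.span (A \<union> B))"
    by (rule corth_sym[OF corth_span])
  then show ?thesis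
    by (rule corth_sym[OF corth_span])
qed

lemma dim_add_dim_le_dim_span_Un_Int_cvec:
  assumes "cv.subspace S" "S \<subseteq> cvec d" "cv.subspace T" "T \<subseteq> cvec d"
  shows "cv.dim S + cv.dim T \<le> cv.dim (cv.span (S \<union> T)) + cv.dim (S \<inter> T)"
  using cv.dim_add_dim_le_dim_span_Un_Int[of "unit_vec ` {..<d}" S T] assms
    cvec_subset_span_unit_vec by blast

lemma dim_add_dim_le_if_corth:
  assumes "cv.subspace S" "S \<subseteq> cvec d" "cv.subspace T" "T \<subseteq> cvec d" "corth d S T"
  shows "cv.dim S + cv.dim T \<le> cv.dim (cv.span (S \<union> T))"
proof -
  have "x = 0" if "x \<in> S" "x \<in> T" for x
  proof -
    have "cinner d x x = 0"
      using assms(5) that by (simp add: corth_def)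
    then show ?thesis
      using assms(2) that(1) cinner_self_eq_0_iff by blast
  qed
  then have "S \<inter> T \<subseteq> cv.span {}"
    by auto
  then have "cv.dim (S \<inter> T) = 0"
    using cv.dim_le_card[of "S \<inter> T" "{}"] by simp
  then show ?thesis
    using dim_add_dim_le_dim_span_Un_Int_cvec[OF assms(1-4)] by simp
qed

lemma sum_dim_le_if_pairwise_corth:
  fixes V :: "nat \<Rightarrow> (nat \<Rightarrow> complex) set"
  assumes V: "\<And>v. v < k \<Longrightarrow> cv.subspace (V v) \<and> V v \<subseteq> cvec d"
    and orth: "\<And>u v. u < k \<Longrightarrow> v < k \<Longrightarrow> u \<noteq> v \<Longrightarrow> corth d (V u) (V v)"
  shows "(\<Sum>v<k. cv.dim (V v)) \<le> d"
proof -
  let ?U = "\<lambda>m. cv.span (\<Union>v<m. V v)"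
  have U: "?U m \<subseteq> cvec d" if "m \<le> k" for m
  proof -
    have "V v \<subseteq> cvec d" if "v < m" for v
      using V[of v] order_less_le_trans[OF that \<open>m \<le> k\<close>] by blast
    with subspace_cvec show ?thesis
      by (intro cv.span_minimal) auto
  qed
  have "(\<Sum>v<m. cv.dim (V v)) \<le> cv.dim (?U m)" if "m \<le> k" for m
    using that
  proof (induction m)
    case 0
    show ?case by simp
  next
    case (Suc m)
    have "corth d (V v) (V m)" if "v < m" for v
      using orth[of v m] that Suc.prems by simp
    then have "corth d (\<Union>v<m. V v) (V m)"
      by (auto simp: corth_def)
    then have "corth d (?U m) (V m)"
      by (rule corth_span)
    then have "cv.dim (?U m) + cv.dim (V m) \<le> cv.dim (cv.span (?U m \<union> V m))"
      using dim_add_dim_le_if_corth[of "?U m" d "V m"] U[of m] V[of m] Suc.prems by simp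
    also have "cv.span (?U m \<union> V m) = cv.span (V m \<union> ?U m)"
      by (simp only: Un_commute)
    also have "\<dots> = ?U (Suc m)"
      by (simp only: cv.span_Un_span_right lessThan_Suc UN_insert)
    finally show ?case
      using Suc by simp
  qed
  then have "(\<Sum>v<k. cv.dim (V v)) \<le> cv.dim (?U k)"
    by simp
  also have "\<dots> \<le> d"
    using U[of k] by (intro dim_le_if_subset_cvec) simp
  finally show ?thesis .
qed

section \<open>Cyclic distance\<close>

lemma le_cycdist_iff:
  assumes "u < p" "v < p"
  shows "q \<le> cycdist p u v \<longleftrightarrow>
    (if u \<le> v then q + u \<le> v \<and> q + v \<le> p + u else q + v \<le> u \<and> q + u \<le> p + v)"
  using assms unfolding cycdist_def Let_def min_def by auto

lemma cycdist_commute: "cycdist p u v = cycdist p v u"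
  by (simp add: cycdist_def Let_def)

lemma cycdist_pos_iff: "u < p \<Longrightarrow> v < p \<Longrightarrow> 0 < cycdist p u v \<longleftrightarrow> u \<noteq> v"
  using le_cycdist_iff[of u p v 1] by (auto split: if_splits)

lemma cycdist_Suc_mod:
  "u < p \<Longrightarrow> v < p \<Longrightarrow> cycdist p (Suc u mod p) (Suc v mod p) = cycdist p u v"
  by (auto simp: mod_Suc cycdist_def Let_def)

lemma le_cycdist_Suc_mod:
  "u < p \<Longrightarrow> v < p \<Longrightarrow> Suc q \<le> cycdist p u v \<Longrightarrow> q \<le> cycdist p u (Suc v mod p)"
  by (auto simp: mod_Suc le_cycdist_iff split: if_splits)

lemma le_cycdist_neighbour:
  assumes "u < p" "v < p" "2 * q \<le> p" "q - 1 \<le> cycdist p u v"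
  shows "q \<le> cycdist p u v \<or> q \<le> cycdist p u (Suc v mod p) \<or> q \<le> cycdist p (Suc u mod p) v"
  using assms
  by (cases "u \<le> v"; cases "Suc u = p"; cases "Suc v = p"; auto simp: mod_Suc le_cycdist_iff)

lemma le_cycdist_double:
  assumes "u < m" "v < m" "s \<le> cycdist m u v"
  shows "2 * s \<le> cycdist (2 * m) (2 * u) (2 * v)"
    and "2 * s \<le> cycdist (2 * m) (2 * u + 1) (2 * v + 1)"
  using assms by (auto simp: le_cycdist_iff split: if_splits)

lemma nonadjacent_iff_le_cycdist:
  assumes "1 \<le> q" "u < p" "v < p"
  shows "u \<noteq> v \<and> \<not> frac_adj p q u v \<longleftrightarrow> q \<le> cycdist p u v"
  using assms cycdist_pos_iff[of u p v] by (auto simp: frac_adj_def)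

section \<open>Orthogonal representations of the complement of a fraction graph\<close>

text \<open>An orthogonal representation of the complement of E_{p/q} in C^d, except that the
  subspaces may have different dimensions.\<close>
definition orth_rep :: "nat \<Rightarrow> nat \<Rightarrow> nat \<Rightarrow> (nat \<Rightarrow> (nat \<Rightarrow> complex) set) \<Rightarrow> bool" where
  "orth_rep p q d V \<longleftrightarrow> (\<forall>v<p. cv.subspace (V v) \<and> V v \<subseteq> cvec d) \<and>
     (\<forall>u<p. \<forall>v<p. q \<le> cycdist p u v \<longrightarrow> corth d (V u) (V v))"

definition rep_dim_bound :: "nat \<Rightarrow> nat \<Rightarrow> bool" where
  "rep_dim_bound p q \<longleftrightarrow> (\<forall>d V. orth_rep p q d V \<longrightarrow> (\<Sum>v<p. cv.dim (V v)) \<le> q * d)"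

lemma orth_repD:
  assumes "orth_rep p q d V"
  shows "v < p \<Longrightarrow> cv.subspace (V v)" "v < p \<Longrightarrow> V v \<subseteq> cvec d"
    and "u < p \<Longrightarrow> v < p \<Longrightarrow> q \<le> cycdist p u v \<Longrightarrow> corth d (V u) (V v)"
  using assms by (auto simp: orth_rep_def)

lemma rep_dim_boundD:
  "rep_dim_bound p q \<Longrightarrow> orth_rep p q d V \<Longrightarrow> (\<Sum>v<p. cv.dim (V v)) \<le> q * d"
  by (simp add: rep_dim_bound_def)

lemma rep_dim_bound_one: "rep_dim_bound p 1"
  unfolding rep_dim_bound_def
proof (intro allI impI)
  fix d V assume rep: "orth_rep p 1 d V"
  have "(\<Sum>v<p. cv.dim (V v)) \<le> d"
  proof (rule sum_dim_le_if_pairwise_corth)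
    show "cv.subspace (V v) \<and> V v \<subseteq> cvec d" if "v < p" for v
      using orth_repD(1,2)[OF rep that] by simp
    show "corth d (V u) (V v)" if "u < p" "v < p" "u \<noteq> v" for u v
      using orth_repD(3)[OF rep that(1,2)] cycdist_pos_iff[OF that(1,2)] that(3) by simp
  qed
  then show "(\<Sum>v<p. cv.dim (V v)) \<le> 1 * d"
    by simp
qed

lemma orth_rep_subsample:
  assumes "orth_rep (2 * m) (2 * s) d V"
  shows "orth_rep m s d (\<lambda>i. V (2 * i))" "orth_rep m s d (\<lambda>i. V (2 * i + 1))"
  using orth_repD[OF assms] le_cycdist_double by (auto simp: orth_rep_def)

lemma sum_lessThan_double:
  fixes f :: "nat \<Rightarrow> 'a::comm_monoid_add"
  shows "(\<Sum>v<2 * m. f v) = (\<Sum>i<m. f (2 * i)) + (\<Sum>i<m. f (2 * i + 1))"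
  by (induction m) (simp_all add: ac_simps)

lemma rep_dim_bound_double:
  assumes "rep_dim_bound m s"
  shows "rep_dim_bound (2 * m) (2 * s)"
  unfolding rep_dim_bound_def
proof (intro allI impI)
  fix d V assume rep: "orth_rep (2 * m) (2 * s) d V"
  have "(\<Sum>v<2 * m. cv.dim (V v)) = (\<Sum>i<m. cv.dim (V (2 * i))) + (\<Sum>i<m. cv.dim (V (2 * i + 1)))"
    by (rule sum_lessThan_double)
  also have "\<dots> \<le> s * d + s * d"
    using rep_dim_boundD[OF assms] orth_rep_subsample[OF rep] by (intro add_mono)
  finally show "(\<Sum>v<2 * m. cv.dim (V v)) \<le> 2 * s * d"
    by simp
qed

lemma orth_rep_span_succ:
  assumes rep: "orth_rep p q d V" and "0 < p"
  shows "orth_rep p (Suc q) d (\<lambda>v. cv.span (V v \<union> V (Suc v mod p)))"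
proof -
  have succ: "Suc v mod p < p" for v
    using \<open>0 < p\<close> by simp
  have "cv.span (V v \<union> V (Suc v mod p)) \<subseteq> cvec d" if "v < p" for v
    using orth_repD(2)[OF rep] that succ subspace_cvec by (intro cv.span_minimal) auto
  moreover have "corth d (cv.span (V u \<union> V (Suc u mod p))) (cv.span (V v \<union> V (Suc v mod p)))"
    if u: "u < p" and v: "v < p" and far: "Suc q \<le> cycdist p u v" for u v
  proof (rule corth_span_Un)
    show "corth d (V u) (V v)"
      using far by (intro orth_repD(3)[OF rep u v]) simp
    show "corth d (V u) (V (Suc v mod p))"
      using le_cycdist_Suc_mod[OF u v far] by (intro orth_repD(3)[OF rep u succ])
    have "q \<le> cycdist p v (Suc u mod p)"
      using far by (intro le_cycdist_Suc_mod[OF v u]) (simp add: cycdist_commute)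
    then show "corth d (V (Suc u mod p)) (V v)"
      by (intro orth_repD(3)[OF rep succ v]) (simp add: cycdist_commute)
    show "corth d (V (Suc u mod p)) (V (Suc v mod p))"
      using cycdist_Suc_mod[OF u v] far by (intro orth_repD(3)[OF rep succ succ]) simp
  qed
  ultimately show ?thesis
    by (simp add: orth_rep_def)
qed

lemma orth_rep_Int_succ:
  assumes rep: "orth_rep p q d V" and "2 * q \<le> p"
  shows "orth_rep p (q - 1) d (\<lambda>v. V v \<inter> V (Suc v mod p))"
proof -
  have "cv.subspace (V v \<inter> V (Suc v mod p)) \<and> V v \<inter> V (Suc v mod p) \<subseteq> cvec d" if "v < p" for v
    using orth_repD(1,2)[OF rep] that cv.subspace_inter by (simp add: le_infI1)
  moreover have "corth d (V u \<inter> V (Suc u mod p)) (V v \<inter> V (Suc v mod p))"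
    if u: "u < p" and v: "v < p" and near: "q - 1 \<le> cycdist p u v" for u v
  proof -
    have succ: "Suc w mod p < p" for w
      using u by simp
    from le_cycdist_neighbour[OF u v \<open>2 * q \<le> p\<close> near]
    have "corth d (V u) (V v) \<or> corth d (V u) (V (Suc v mod p)) \<or> corth d (V (Suc u mod p)) (V v)"
      using orth_repD(3)[OF rep u v] orth_repD(3)[OF rep u succ] orth_repD(3)[OF rep succ v]
      by blast
    then show ?thesis
      by (auto simp: corth_def)
  qed
  ultimately show ?thesis
    by (simp add: orth_rep_def)
qed

lemma sum_lessThan_Suc_mod:
  fixes f :: "nat \<Rightarrow> 'a::comm_monoid_add"
  shows "(\<Sum>v<p. f (Suc v mod p)) = (\<Sum>v<p. f v)"
proof (cases p)
  case (Suc k)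
  have "(\<Sum>v<Suc k. f (Suc v mod Suc k)) = (\<Sum>v<k. f (Suc v)) + f 0"
    by (simp add: sum.lessThan_Suc)
  also have "\<dots> = f 0 + (\<Sum>v<k. f (Suc v))"
    by (rule add.commute)
  also have "\<dots> = (\<Sum>v<Suc k. f v)"
    by (rule sum.lessThan_Suc_shift[symmetric])
  finally show ?thesis
    using Suc by simp
qed simp

lemma sum_dim_le_span_succ_Int_succ:
  assumes rep: "orth_rep p q d V"
  shows "2 * (\<Sum>v<p. cv.dim (V v)) \<le>
    (\<Sum>v<p. cv.dim (cv.span (V v \<union> V (Suc v mod p)))) + (\<Sum>v<p. cv.dim (V v \<inter> V (Suc v mod p)))"
proof -
  have "cv.dim (V v) + cv.dim (V (Suc v mod p)) \<le>
      cv.dim (cv.span (V v \<union> V (Suc v mod p))) + cv.dim (V v \<inter> V (Suc v mod p))" if "v < p" for v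
    using that by (intro dim_add_dim_le_dim_span_Un_Int_cvec[where d = d] orth_repD[OF rep]) simp_all
  then have "(\<Sum>v<p. cv.dim (V v) + cv.dim (V (Suc v mod p))) \<le>
      (\<Sum>v<p. cv.dim (cv.span (V v \<union> V (Suc v mod p))) + cv.dim (V v \<inter> V (Suc v mod p)))"
    by (intro sum_mono) simp
  then show ?thesis
    by (simp add: sum.distrib sum_lessThan_Suc_mod[of "\<lambda>v. cv.dim (V v)"])
qed

lemma rep_dim_bound_from_neighbours:
  assumes "0 < q" "2 * q \<le> p" "rep_dim_bound p (q - 1)" "rep_dim_bound p (Suc q)"
  shows "rep_dim_bound p q"
  unfolding rep_dim_bound_def
proof (intro allI impI)
  fix d V assume rep: "orth_rep p q d V"
  have "2 * (\<Sum>v<p. cv.dim (V v)) \<le>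
    (\<Sum>v<p. cv.dim (cv.span (V v \<union> V (Suc v mod p)))) + (\<Sum>v<p. cv.dim (V v \<inter> V (Suc v mod p)))"
    by (rule sum_dim_le_span_succ_Int_succ[OF rep])
  also have "\<dots> \<le> Suc q * d + (q - 1) * d"
  proof (rule add_mono)
    show "(\<Sum>v<p. cv.dim (cv.span (V v \<union> V (Suc v mod p)))) \<le> Suc q * d"
      using assms(1,2) by (intro rep_dim_boundD[OF assms(4)] orth_rep_span_succ[OF rep]) simp
    show "(\<Sum>v<p. cv.dim (V v \<inter> V (Suc v mod p))) \<le> (q - 1) * d"
      by (intro rep_dim_boundD[OF assms(3)] orth_rep_Int_succ[OF rep assms(2)])
  qed
  also have "\<dots> = 2 * (q * d)"
    using assms(1) by (cases q) (simp_all add: algebra_simps)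
  finally show "(\<Sum>v<p. cv.dim (V v)) \<le> q * d"
    by simp
qed

lemma Suc_le_power2_if_odd:
  fixes q n :: nat
  assumes "odd q" "1 < q" "q \<le> 2 ^ n"
  shows "Suc q \<le> 2 ^ n"
proof -
  have "n \<noteq> 0"
    using assms(2,3) by (cases n) auto
  then have "q \<noteq> 2 ^ n"
    using assms(1) by auto
  then show ?thesis
    using assms(3) by simp
qed

lemma rep_dim_bound_pow2:
  assumes "1 \<le> q" "2 * q \<le> 2 ^ n"
  shows "rep_dim_bound (2 ^ n) q"
  using assms
proof (induction n arbitrary: q)
  case 0
  then show ?case by simp
next
  case (Suc n)
  have even: "rep_dim_bound (2 ^ Suc n) (2 * s)" if "1 \<le> s" "2 * s \<le> 2 ^ n" for s
    using rep_dim_bound_double[OF Suc.IH[OF that]] by simp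
  show ?case
  proof (cases "even q")
    case True
    then obtain s where "q = 2 * s"
      by (rule evenE)
    then show ?thesis
      using even[of s] Suc.prems by simp
  next
    case False
    then obtain s where s: "q = 2 * s + 1"
      by (rule oddE)
    show ?thesis
    proof (cases "s = 0")
      case True
      then show ?thesis
        using s rep_dim_bound_one by simp
    next
      case False
      have "Suc q \<le> 2 ^ n"
        using \<open>odd q\<close> s False Suc.prems(2) by (intro Suc_le_power2_if_odd) auto
      then show ?thesis
        using rep_dim_bound_from_neighbours[of q "2 ^ Suc n"] even[of s] even[of "s + 1"] s False
          Suc.prems
        by simp
    qed
  qed
qed

section \<open>The window representation\<close>

definition window :: "nat \<Rightarrow> nat \<Rightarrow> nat \<Rightarrow> nat set" where
  "window p q v = (\<lambda>j. (v + j) mod p) ` {..<q}"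

lemma mod_eq_if_less_double: "x < 2 * p \<Longrightarrow> x mod p = (if x < p then x else x - p)"
  for x p :: nat
  by (simp add: mod_if le_mod_geq)

lemma card_window:
  assumes "q \<le> p" "v < p"
  shows "card (window p q v) = q"
proof -
  have "inj_on (\<lambda>j. (v + j) mod p) {..<q}"
  proof (rule inj_onI)
    fix j k assume "j \<in> {..<q}" "k \<in> {..<q}" "(v + j) mod p = (v + k) mod p"
    then show "j = k"
      using assms mod_eq_if_less_double[of "v + j" p] mod_eq_if_less_double[of "v + k" p]
      by (auto split: if_splits)
  qed
  then show ?thesis
    by (simp add: window_def card_image)
qed

lemma window_subset: "0 < p \<Longrightarrow> window p q v \<subseteq> {..<p}"
  by (auto simp: window_def)

lemma window_disjoint:
  assumes "u < p" "v < p" "q \<le> cycdist p u v"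
  shows "window p q u \<inter> window p q v = {}"
proof -
  have "(u + j) mod p \<noteq> (v + k) mod p" if "j < q" "k < q" for j k
    using that assms le_cycdist_iff[OF assms(1,2), of q]
      mod_eq_if_less_double[of "u + j" p] mod_eq_if_less_double[of "v + k" p]
    by (auto split: if_splits)
  then show ?thesis
    by (auto simp: window_def)
qed

lemma cspan_unit_vec_vanishes:
  assumes "x \<in> cspan (unit_vec ` K)" "i \<notin> K"
  shows "x i = 0"
proof -
  obtain c where "x = (\<lambda>i. \<Sum>b\<in>unit_vec ` K. c b * b i)"
    using assms(1) by (auto simp: cspan_def)
  moreover have "b i = 0" if "b \<in> unit_vec ` K" for b
    using that assms(2) by (auto simp: unit_vec_def)
  ultimately show ?thesis
    by (auto intro!: sum.neutral)
qed

lemma cindep_unit_vec: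
  assumes "finite K"
  shows "cindep (unit_vec ` K)"
  unfolding cindep_def
proof (intro allI impI ballI)
  fix c :: "(nat \<Rightarrow> complex) \<Rightarrow> complex" and b
  assume zero: "\<forall>i. (\<Sum>b\<in>unit_vec ` K. c b * b i) = 0" and "b \<in> unit_vec ` K"
  then obtain k where k: "k \<in> K" "b = unit_vec k"
    by auto
  have "(\<Sum>b\<in>unit_vec ` K. c b * b k) = (\<Sum>l\<in>K. c (unit_vec l) * unit_vec l k)"
    using inj_unit_vec by (simp add: sum.reindex inj_on_subset)
  also have "\<dots> = (\<Sum>l\<in>K. if l = k then c (unit_vec k) else 0)"
    by (intro sum.cong) (auto simp: unit_vec_def)
  also have "\<dots> = c b"
    using k assms by simp
  finally show "c b = 0"
    using zero by simp
qed

lemma csubspace_dim_unit_vec: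
  assumes "finite K" "K \<subseteq> {..<d}"
  shows "csubspace_dim d (card K) (cspan (unit_vec ` K))"
  unfolding csubspace_dim_def
proof (intro conjI exI)
  show "cspan (unit_vec ` K) \<subseteq> cvec d"
    using assms(2) cspan_unit_vec_vanishes by (fastforce simp: cvec_def)
  show "card (unit_vec ` K) = card K"
    using inj_unit_vec by (simp add: card_image inj_on_subset)
  show "unit_vec ` K \<subseteq> cspan (unit_vec ` K)"
    using assms(1) cv.span_superset by (simp add: cspan_eq_span)
qed (use assms(1) cindep_unit_vec in simp_all)

lemma corth_cspan_unit_vec:
  assumes "K \<inter> L = {}"
  shows "corth d (cspan (unit_vec ` K)) (cspan (unit_vec ` L))"
  unfolding corth_def cinner_def
proof (intro ballI sum.neutral)
  fix x y i assume "x \<in> cspan (unit_vec ` K)" "y \<in> cspan (unit_vec ` L)"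
  then show "x i * cnj (y i) = 0"
    using assms cspan_unit_vec_vanishes by (cases "i \<in> K") auto
qed

lemma window_rep:
  assumes "1 \<le> q" "q \<le> p"
  shows "\<exists>W. (\<forall>v\<in>{0..<p}. csubspace_dim p q (W v)) \<and>
    (\<forall>u\<in>{0..<p}. \<forall>v\<in>{0..<p}. u \<noteq> v \<and> \<not> frac_adj p q u v \<longrightarrow> corth p (W u) (W v))"
proof (intro exI conjI ballI impI)
  fix v assume "v \<in> {0..<p}"
  then show "csubspace_dim p q (cspan (unit_vec ` window p q v))"
    using csubspace_dim_unit_vec[of "window p q v" p] card_window[OF assms(2)] window_subset
    by (simp add: window_def)
next
  fix u v assume "u \<in> {0..<p}" "v \<in> {0..<p}" "u \<noteq> v \<and> \<not> frac_adj p q u v"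
  then show "corth p (cspan (unit_vec ` window p q u)) (cspan (unit_vec ` window p q v))"
    using assms(1) nonadjacent_iff_le_cycdist window_disjoint corth_cspan_unit_vec by simp
qed

section \<open>The complement of the projective rank of E_{p/q}\<close>

lemma frac_le_ratio_of_assignment:
  assumes "rep_dim_bound p q" "1 \<le> q" "1 \<le> r"
    and W: "\<forall>v\<in>{0..<p}. csubspace_dim d r (W v)"
    and orth: "\<forall>u\<in>{0..<p}. \<forall>v\<in>{0..<p}. u \<noteq> v \<and> \<not> frac_adj p q u v \<longrightarrow> corth d (W u) (W v)"
  shows "real p / real q \<le> real d / real r"
proof -
  have "cv.subspace (W v) \<and> W v \<subseteq> cvec d" if "v < p" for v
    using W that csubspace_dimD(1,2)[of d r "W v"] by simp
  moreover have "corth d (W u) (W v)" if "u < p" "v < p" "q \<le> cycdist p u v" for u v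
    using orth that nonadjacent_iff_le_cycdist[OF assms(2) that(1,2)] by simp
  ultimately have "orth_rep p q d W"
    by (simp add: orth_rep_def)
  then have "(\<Sum>v<p. cv.dim (W v)) \<le> q * d"
    by (rule rep_dim_boundD[OF assms(1)])
  moreover have "(\<Sum>v<p. cv.dim (W v)) = p * r"
    using W csubspace_dimD(3)[of d r] by simp
  ultimately have "real p * real r \<le> real q * real d"
    by (metis of_nat_le_iff of_nat_mult)
  then show ?thesis
    using assms(2,3) by (simp add: divide_le_eq le_divide_eq mult.commute)
qed

lemma xi_f_bar_frac_adj:
  assumes "1 \<le> q" "q \<le> p" "rep_dim_bound p q"
  shows "xi_f_bar {0..<p} (frac_adj p q) = real p / real q"
  unfolding xi_f_bar_def
proof (rule cInf_eq_minimum, goal_cases)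
  case 1
  then show ?case
    using window_rep[OF assms(1,2)] assms(1) by blast
next
  case (2 x)
  then show ?case
    using frac_le_ratio_of_assignment[OF assms(3,1)] by blast
qed

theorem corollary18:
  fixes n q :: nat
  assumes "n \<ge> 1" and "1 \<le> q" and "q \<le> 2 ^ (n - 1)"
  shows "xi_f_bar {0..<2 ^ n} (frac_adj (2 ^ n) q) = real (2 ^ n) / real q"
proof -
  have "2 * q \<le> 2 ^ n"
    using assms(1,3) by (cases n) auto
  then have "rep_dim_bound (2 ^ n) q"
    by (rule rep_dim_bound_pow2[OF assms(2)])
  moreover have "q \<le> 2 ^ n"
    using \<open>2 * q \<le> 2 ^ n\<close> by simp
  ultimately show ?thesis
    using xi_f_bar_frac_adj[OF assms(2)] by blast
qed

end
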